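(* Fix parameters $1\ge p_1\ge p_2\ge\cdots\ge p_r>0$. If $Z_{p_{i+1},p_i}$, $i=1,\dots,r-1$, are independent random variables with the indicated zero-inflated geometric distributions, then \[ \sum_{i=1}^{r-1}Z_{p_{i+1},p_i}\ \stackrel{d}{=}\ Z_{p_r,p_1}. \]
   Context: ${\rm Geom}(q)$ is the geometric distribution on $\{1,2,\dots\}$ with $\Pr(G=j)=(1-q)^{j-1}q$. For $0\le q\le p\le 1$, the zero-inflated geometric random variable is $Z_{q,p}:=B\cdot G$ where $B\sim{\rm Bernoulli}(1-q/p)$ and $G\sim{\rm Geom}(q)$ are independent. $\stackrel{d}{=}$ denotes equality in distribution. *)

theory Defs
  imports "HOL-Probability.Probability"
begin

text \<open>Geom(q) on {1,2,...}: Pr(G=j) = (1-q)^(j-1) q. The library geometric_pmf counts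
  failures on {0,1,...}, so we shift by one. (Meaningful for 0 < q <= 1.)\<close>
definition geom1_pmf :: "real \<Rightarrow> nat pmf" where
  "geom1_pmf q = map_pmf Suc (geometric_pmf q)"

definition zig_pmf :: "real \<Rightarrow> real \<Rightarrow> nat pmf" where
  "zig_pmf q p = map_pmf (\<lambda>(b, g). (if b then 1 else 0) * g)
                   (pair_pmf (bernoulli_pmf (1 - q / p)) (geom1_pmf q))"

end

theory Submission
  imports Defs
begin

text \<open>For independent summands and s \<le> q \<le> p, Z_{s,q} + Z_{q,p} has the law of Z_{s,p}:
  the mass at 0 is (s/q)(q/p) = s/p, and at n = m + 1 the convolution collapses by the geometric
  sum identity (q - s) (\<Sum>i<m. (1-q)^(m-1-i) (1-s)^i) = (1-s)^m - (1-q)^m to (1 - s/p) s (1-s)^m.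
  Adding the summands of the chain one at a time then telescopes the parameters.\<close>

lemma pmf_geom1_0 [simp]: "pmf (geom1_pmf q) 0 = 0"
  unfolding geom1_pmf_def by (simp add: pmf_map_outside)

lemma pmf_geom1_Suc:
  assumes "0 < q" "q \<le> 1"
  shows "pmf (geom1_pmf q) (Suc n) = q * (1 - q) ^ n"
  using assms unfolding geom1_pmf_def by (subst pmf_map_inj') (auto simp: inj_on_def)

lemma zig_pmf_conv_bind:
  "zig_pmf q p = bernoulli_pmf (1 - q / p) \<bind> (\<lambda>b. if b then geom1_pmf q else return_pmf 0)"
  unfolding zig_pmf_def pair_pmf_def map_bind_pmf
  by (intro bind_pmf_cong refl) (auto simp: map_bind_pmf bind_return_pmf')

lemma zig_pmf_self:
  assumes "q \<noteq> 0"
  shows "zig_pmf q q = return_pmf 0"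
proof -
  have "bernoulli_pmf 0 = return_pmf False"
    by (rule pmf_eqI) (simp add: indicator_def split: bool.split)
  then show ?thesis
    using assms by (simp add: zig_pmf_conv_bind bind_return_pmf)
qed

lemma pmf_zig_0:
  assumes "0 < q" "q \<le> p"
  shows "pmf (zig_pmf q p) 0 = q / p"
  using assms by (simp add: zig_pmf_conv_bind pmf_bind)

lemma pmf_zig_Suc:
  assumes "0 < q" "q \<le> p" "q \<le> 1"
  shows "pmf (zig_pmf q p) (Suc n) = (1 - q / p) * q * (1 - q) ^ n"
  using assms by (simp add: zig_pmf_conv_bind pmf_bind pmf_geom1_Suc)

lemma pmf_map_add_pair_pmf:
  "pmf (map_pmf (\<lambda>(a, b). a + b) (pair_pmf A B)) (n :: nat) = (\<Sum>a\<le>n. pmf A a * pmf B (n - a))"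
proof -
  have "(\<lambda>(a, b). a + b) -` {n} = (\<lambda>a. (a, n - a)) ` {..n}"
    by (auto simp: image_iff)
  moreover have "inj_on (\<lambda>a. (a, n - a)) {..n}"
    by (auto simp: inj_on_def)
  ultimately show ?thesis
    unfolding pmf_map by (subst measure_measure_pmf_finite) (auto simp: sum.reindex pmf_pair)
qed

lemma zig_pmf_add:
  assumes "0 < s" "s \<le> q" "q \<le> p" "q \<le> 1"
  shows "map_pmf (\<lambda>(a, b). a + b) (pair_pmf (zig_pmf s q) (zig_pmf q p)) = zig_pmf s p"
proof (rule pmf_eqI)
  fix n :: nat
  have "0 < q" "0 < p" using assms by auto
  note pmf_zig = pmf_zig_0 pmf_zig_Suc
  show "pmf (map_pmf (\<lambda>(a, b). a + b) (pair_pmf (zig_pmf s q) (zig_pmf q p))) n = pmf (zig_pmf s p) n"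
  proof (cases n)
    case 0
    then show ?thesis using assms by (simp add: pmf_map_add_pair_pmf pmf_zig)
  next
    case (Suc m)
    define x y where "x = 1 - q" and "y = 1 - s"
    have "pmf (map_pmf (\<lambda>(a, b). a + b) (pair_pmf (zig_pmf s q) (zig_pmf q p))) n
        = pmf (zig_pmf s q) 0 * pmf (zig_pmf q p) (Suc m)
          + (\<Sum>i<m. pmf (zig_pmf s q) (Suc i) * pmf (zig_pmf q p) (Suc (m - Suc i)))
          + pmf (zig_pmf s q) (Suc m) * pmf (zig_pmf q p) 0"
      unfolding pmf_map_add_pair_pmf Suc sum.atMost_Suc_shift
      by (simp add: lessThan_Suc_atMost[symmetric] Suc_diff_Suc)
    also have "\<dots> = s / q * (1 - q / p) * q * x ^ m
          + (\<Sum>i<m. (1 - s / q) * s * y ^ i * ((1 - q / p) * q * x ^ (m - Suc i)))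
          + (1 - s / q) * s * y ^ m * (q / p)"
      using assms by (simp add: pmf_zig x_def y_def)
    also have "\<dots> = s / q * (1 - q / p) * q * x ^ m
          + s * (1 - q / p) * ((y - x) * (\<Sum>i<m. x ^ (m - Suc i) * y ^ i))
          + (1 - s / q) * s * y ^ m * (q / p)"
    proof -
      have "(1 - s / q) * s * y ^ i * ((1 - q / p) * q * x ^ k) = s * (1 - q / p) * ((y - x) * (x ^ k * y ^ i))"
        for i k :: nat
        using \<open>0 < q\<close> by (simp add: x_def y_def field_simps)
      then show ?thesis by (simp only: sum_distrib_left)
    qed
    also have "\<dots> = s / q * (1 - q / p) * q * x ^ m + s * (1 - q / p) * (y ^ m - x ^ m)
          + (1 - s / q) * s * y ^ m * (q / p)"
      by (simp only: power_diff_sumr2)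
    also have "\<dots> = (1 - s / p) * s * y ^ m"
      using \<open>0 < q\<close> \<open>0 < p\<close> by (simp add: field_simps)
    finally show ?thesis
      using assms Suc by (simp add: pmf_zig y_def)
  qed
qed

lemma map_sum_Pi_pmf_insert:
  fixes M :: "'a \<Rightarrow> 'b :: comm_monoid_add pmf"
  assumes "finite A" "a \<notin> A"
  shows "map_pmf (\<lambda>Z. \<Sum>i\<in>insert a A. Z i) (Pi_pmf (insert a A) d M)
       = map_pmf (\<lambda>(x, y). x + y) (pair_pmf (M a) (map_pmf (\<lambda>Z. \<Sum>i\<in>A. Z i) (Pi_pmf A d M)))"
  unfolding Pi_pmf_insert[OF assms] pair_map_pmf2 map_pmf_comp
  using assms by (intro map_pmf_cong refl) (auto intro!: sum.cong arg_cong2[where f="(+)"])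

lemma stepwise_antimono_le:
  fixes p :: "nat \<Rightarrow> 'a :: order"
  assumes "\<And>i. j \<le> i \<Longrightarrow> i < r \<Longrightarrow> p (Suc i) \<le> p i" "j \<le> r"
  shows "p r \<le> p j"
  using assms(2)
proof (induction r rule: dec_induct)
  case (step i)
  then show ?case using assms(1)[of i] by simp
qed simp

theorem mainTheorem3:
  fixes p :: "nat \<Rightarrow> real" and r :: nat
  assumes "r \<ge> 1"
    and "p 1 \<le> 1"
    and "\<And>i. 1 \<le> i \<Longrightarrow> i < r \<Longrightarrow> p (Suc i) \<le> p i"
    and "p r > 0"
  shows "map_pmf (\<lambda>Z. \<Sum>i\<in>{1..<r}. Z i)
           (Pi_pmf {1..<r} 0 (\<lambda>i. zig_pmf (p (Suc i)) (p i)))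
         = zig_pmf (p r) (p 1)"
  using assms
proof (induction r)
  case (Suc r)
  show ?case
  proof (cases "r = 0")
    case True
    then show ?thesis using Suc.prems(4) by (simp add: zig_pmf_self)
  next
    case False
    have "p (Suc r) \<le> p r" using Suc.prems(3)[of r] False by simp
    have "p r \<le> p 1" using stepwise_antimono_le[of 1 r p] Suc.prems(3) False by simp
    have "0 < p r" using \<open>p (Suc r) \<le> p r\<close> Suc.prems(4) by linarith
    have insert_r: "{1..<Suc r} = insert r {1..<r}" using False by auto
    have "map_pmf (\<lambda>Z. \<Sum>i\<in>{1..<Suc r}. Z i) (Pi_pmf {1..<Suc r} 0 (\<lambda>i. zig_pmf (p (Suc i)) (p i)))
        = map_pmf (\<lambda>(a, b). a + b) (pair_pmf (zig_pmf (p (Suc r)) (p r))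
            (map_pmf (\<lambda>Z. \<Sum>i\<in>{1..<r}. Z i) (Pi_pmf {1..<r} 0 (\<lambda>i. zig_pmf (p (Suc i)) (p i)))))"
      unfolding insert_r by (rule map_sum_Pi_pmf_insert) simp_all
    also have "\<dots> = map_pmf (\<lambda>(a, b). a + b) (pair_pmf (zig_pmf (p (Suc r)) (p r)) (zig_pmf (p r) (p 1)))"
      using Suc.prems False \<open>0 < p r\<close> by (subst Suc.IH) simp_all
    also have "\<dots> = zig_pmf (p (Suc r)) (p 1)"
      using Suc.prems \<open>p (Suc r) \<le> p r\<close> \<open>p r \<le> p 1\<close> by (intro zig_pmf_add) simp_all
    finally show ?thesis .
  qed
qed simp

end
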